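(* Fix $\rho_r\in(0,1)$, $\rho_w\in(0,1/2)$ and $\epsilon>0$ with $\rho_r<1-h(\rho_w)-2\epsilon$. Let $C\subseteq\{0,1\}^n$ consist of $2^{Rn}$ independent uniformly random vectors, $R=1-h(\rho_w)-\epsilon$. Then with high probability over the choice of $C$, the following holds: when the transmitted codeword is chosen uniformly from $C$, for every adversary that reads an arbitrary set of $\rho_r n$ coordinates of the transmitted codeword and then adds an error vector of Hamming weight at most $\rho_w n$ whose distribution depends only on $C$ and the read symbols (with their positions), the probability that nearest-neighbor decoding of the received word does not return the transmitted codeword is $o(1)$ as $n\to\infty$.
   Context: $h$ is the binary entropy function. A decoding error is counted whenever the Hamming ball of radius $\rho_w n$ around the received word $x+e$ contains a codeword other than the transmitted $x$. *)

theory Defs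
  imports "HOL-Probability.Probability"
begin

definition bin_entropy :: "real \<Rightarrow> real" where
  "bin_entropy p = - p * log 2 p - (1 - p) * log 2 (1 - p)"

text \<open>Vectors in {0,1}^n are represented by their supports, i.e. subsets of {0..<n}.
  Addition over GF(2) is symmetric difference.\<close>
definition vadd :: "nat set \<Rightarrow> nat set \<Rightarrow> nat set" where
  "vadd x y = (x - y) \<union> (y - x)"

definition hdist :: "nat set \<Rightarrow> nat set \<Rightarrow> nat" where
  "hdist x y = card (vadd x y)"

definition code_size :: "real \<Rightarrow> nat \<Rightarrow> nat" where
  "code_size R n = nat \<lfloor>2 powr (R * real n)\<rfloor>"

text \<open>Random code: M independent uniformly random vectors of {0,1}^n,
  i.e. a uniformly random function from indices {..<M} to vectors.\<close>
definition random_code :: "nat \<Rightarrow> nat \<Rightarrow> (nat \<Rightarrow> nat set) pmf" where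
  "random_code M n = pmf_of_set (PiE {..<M} (\<lambda>_. Pow {..<n}))"

definition decoding_error ::
  "real \<Rightarrow> nat \<Rightarrow> nat \<Rightarrow> (nat \<Rightarrow> nat set) \<Rightarrow> nat \<Rightarrow> nat set \<Rightarrow> bool" where
  "decoding_error rho_w n M c i e \<longleftrightarrow>
     (\<exists>j<M. c j \<noteq> c i \<and> real (hdist (c j) (vadd (c i) e)) \<le> rho_w * real n)"

text \<open>An admissible adversary: reads the coordinates in S (|S| \<le> rho_r n), and
  given the read symbols (the set c i \<inter> S, which together with S determines
  the read values and positions) outputs a random error vector of weight \<le> rho_w n.\<close>
definition admissible_adversary ::
  "real \<Rightarrow> real \<Rightarrow> nat \<Rightarrow> nat set \<Rightarrow> (nat set \<Rightarrow> nat set pmf) \<Rightarrow> bool" where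
  "admissible_adversary rho_r rho_w n S E \<longleftrightarrow>
     S \<subseteq> {..<n} \<and> real (card S) \<le> rho_r * real n \<and>
     (\<forall>y. \<forall>e \<in> set_pmf (E y). e \<subseteq> {..<n} \<and> real (card e) \<le> rho_w * real n)"

definition error_prob ::
  "real \<Rightarrow> nat \<Rightarrow> nat \<Rightarrow> (nat \<Rightarrow> nat set) \<Rightarrow> nat set \<Rightarrow> (nat set \<Rightarrow> nat set pmf) \<Rightarrow> real" where
  "error_prob rho_w n M c S E =
     (\<Sum>i<M. measure_pmf.prob (E (c i \<inter> S)) {e. decoding_error rho_w n M c i e}) / real M"

end

theory Submission
  imports Defs "HOL-Real_Asymp.Real_Asymp"
begin

text \<open>If decoding fails for the transmitted index \<open>i\<close>, some \<open>j \<noteq> i\<close> has \<open>c j\<close> within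
  \<open>rho_w n\<close> of \<open>c i + e\<close>. The indices \<open>i\<close> and \<open>j\<close> differ in some bit \<open>b < n\<close>, so \<open>i\<close> lies
  in the class \<open>{bit \<cdot> b = v}\<close> and is confusable with a codeword of the opposite class. The
  codewords of the two classes are independent, hence the number of such \<open>i\<close> with read symbols
  \<open>c i \<inter> S = y\<close> has exponential moment at most \<open>exp (4 M\<^sup>2 V / (2\<^sup>n 2\<^bsup>|S|\<^esup>))\<close>, where
  \<open>V = 2\<^bsup>h(rho_w) n\<^esup>\<close> bounds the volume of a Hamming ball; so it exceeds \<open>M / (p 2\<^bsup>|S|\<^esup>)\<close>,
  with \<open>p = 2\<^bsup>eps n / 2\<^esup>\<close>, only with probability \<open>exp (- p / 4)\<close>. A union bound over the at
  most \<open>2 n 8\<^sup>n\<close> choices of \<open>(S, y, e, b, v)\<close> gives, with probability \<open>1 - o(1)\<close>, a code for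
  which all these counts are small, and then every admissible adversary has error probability at
  most \<open>2 n / p\<close>.\<close>

lemma vadd_vadd_cancel: "vadd (vadd x t) t = x"
  unfolding vadd_def by auto

lemma vadd_subset: "x \<subseteq> A \<Longrightarrow> y \<subseteq> A \<Longrightarrow> vadd x y \<subseteq> A"
  unfolding vadd_def by auto

lemma hdist_vadd_swap: "hdist u (vadd x e) = hdist x (vadd u e)"
  unfolding hdist_def by (rule arg_cong[where f = card]) (auto simp: vadd_def)

lemma card_vadd_translate:
  assumes "t \<subseteq> {..<n}"
  shows "card {x\<in>Pow {..<n}. Q (vadd x t)} = card {v\<in>Pow {..<n}. Q v}"
proof -
  have "vadd x t \<subseteq> {..<n}" if "x \<subseteq> {..<n}" for x
    using vadd_subset[OF that assms] .
  then have "bij_betw (\<lambda>x. vadd x t) {x\<in>Pow {..<n}. Q (vadd x t)} {v\<in>Pow {..<n}. Q v}"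
    by (intro bij_betw_byWitness[where f' = "\<lambda>x. vadd x t"]) (auto simp: vadd_vadd_cancel)
  then show ?thesis
    by (rule bij_betw_same_card)
qed

lemma card_Pow_slice:
  assumes "S \<subseteq> {..<n}"
  shows "real (card {x\<in>Pow {..<n}. x \<inter> S = y}) \<le> 2^n / 2^card S"
proof (cases "y \<subseteq> S")
  case True
  have "bij_betw (\<lambda>x. x - S) {x\<in>Pow {..<n}. x \<inter> S = y} (Pow ({..<n} - S))"
    by (rule bij_betw_byWitness[where f' = "\<lambda>z. z \<union> y"]) (use True assms in auto)
  then have "real (card {x\<in>Pow {..<n}. x \<inter> S = y}) = 2 ^ (n - card S)"
    using assms by (simp add: bij_betw_same_card card_Pow card_Diff_subset finite_subset)
  also have "\<dots> = 2^n / 2^card S"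
    using card_mono[OF _ assms] by (simp add: power_diff)
  finally show ?thesis
    by simp
next
  case False
  then have "{x\<in>Pow {..<n}. x \<inter> S = y} = {}"
    by blast
  then show ?thesis
    by (simp only: card.empty) simp
qed

lemma exists_bit_neq:
  fixes i j :: nat
  assumes "i < 2^n" "j < 2^n" "i \<noteq> j"
  shows "\<exists>b<n. bit i b \<noteq> bit j b"
proof (rule ccontr)
  assume same: "\<not> ?thesis"
  have "bit i b = bit j b" for b
  proof (cases "b < n")
    case False
    then have "(2::nat)^n \<le> 2^b"
      by (intro power_increasing) auto
    then have "i < 2^b" "j < 2^b"
      using assms(1,2) by linarith+
    then have "i div 2^b = 0" "j div 2^b = 0"
      by auto
    then show ?thesis
      by (simp add: bit_iff_odd)
  qed (use same in auto)
  then show False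
    using assms(3) by (simp add: bit_eq_iff)
qed

lemma real_card_filter_eq_sum:
  "finite A \<Longrightarrow> real (card {x\<in>A. P x}) = (\<Sum>x\<in>A. of_bool (P x))"
  by (simp add: Int_def conj_commute)

lemma sum_Pow_weights:
  fixes p q :: real
  assumes "finite A"
  shows "(\<Sum>v\<in>Pow A. p ^ card v * q ^ card (A - v)) = (p + q) ^ card A"
proof -
  have "(p + q) ^ card A = (\<Prod>x\<in>A. p + q)"
    by simp
  also have "\<dots> = (\<Sum>v\<in>Pow A. prod (\<lambda>_. p) v * prod (\<lambda>_. q) (A - v))"
    by (rule prod_add[OF assms])
  finally show ?thesis
    by (simp only: prod_constant)
qed

lemma bin_entropy_nonneg:
  assumes "0 < p" "p < 1"
  shows "0 \<le> bin_entropy p"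
proof -
  have "p * log 2 p < 0" "(1 - p) * log 2 (1 - p) < 0"
    using assms by (simp_all add: mult_pos_neg)
  then show ?thesis
    unfolding bin_entropy_def by simp
qed

lemma biased_weight_ge:
  assumes "0 < p" "p \<le> 1/2" and v: "v \<subseteq> {..<n}" "real (card v) \<le> p * real n"
  shows "2 powr (- bin_entropy p * real n) \<le> p ^ card v * (1 - p) ^ card ({..<n} - v)"
proof -
  define q where "q = 1 - p"
  have q: "0 < q" "p \<le> q"
    using assms unfolding q_def by auto
  have card_v: "card v \<le> n" "card ({..<n} - v) = n - card v"
    using v card_mono[of "{..<n}" v] by (auto simp: card_Diff_subset finite_subset)
  have "2 powr (- bin_entropy p * real n) = exp (real n * (p * ln p + q * ln q))"
    unfolding powr_def bin_entropy_def log_def q_def by (simp add: field_simps)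
  also have "\<dots> \<le> exp (real (card v) * ln p + real (n - card v) * ln q)"
  proof -
    have "real (card v) * ln p + real (n - card v) * ln q - real n * (p * ln p + q * ln q)
        = (p * real n - real (card v)) * (ln q - ln p)"
      using card_v by (simp add: algebra_simps q_def of_nat_diff)
    moreover have "0 \<le> (p * real n - real (card v)) * (ln q - ln p)"
      using v q assms by (intro mult_nonneg_nonneg) auto
    ultimately show ?thesis
      by simp
  qed
  also have "\<dots> = p ^ card v * q ^ card ({..<n} - v)"
  proof -
    have "exp (real k * ln x) = x ^ k" if "0 < x" for k and x :: real
      using that by (simp add: exp_of_nat_mult)
    then show ?thesis
      using assms q card_v by (simp only: exp_add)
  qed
  finally show ?thesis
    unfolding q_def .
qed

text \<open>The \<open>p\<close>-biased product measure has total mass \<open>1\<close> and gives each word of weight at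
  most \<open>p n\<close> mass at least \<open>2 powr (- h(p) n)\<close>.\<close>

lemma card_weight_le:
  assumes "0 < p" "p \<le> 1/2"
  shows "real (card {v\<in>Pow {..<n}. real (card v) \<le> p * real n}) \<le> 2 powr (bin_entropy p * real n)"
proof -
  define V where "V = {v\<in>Pow {..<n}. real (card v) \<le> p * real n}"
  have "real (card V) * 2 powr (- bin_entropy p * real n)
      \<le> (\<Sum>v\<in>V. p ^ card v * (1 - p) ^ card ({..<n} - v))"
    using sum_mono[of V "\<lambda>_. 2 powr (- bin_entropy p * real n)"] biased_weight_ge[OF assms]
    by (auto simp: V_def)
  also have "\<dots> \<le> (\<Sum>v\<in>Pow {..<n}. p ^ card v * (1 - p) ^ card ({..<n} - v))"
    using assms by (intro sum_mono2) (auto simp: V_def)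
  also have "\<dots> = 1"
    using sum_Pow_weights[of "{..<n}" p "1 - p"] by simp
  finally show ?thesis
    unfolding V_def[symmetric] by (simp add: powr_minus field_simps)
qed

lemma card_hamming_ball_le:
  assumes "0 < rho" "rho \<le> 1/2" "t \<subseteq> {..<n}"
  shows "real (card {x\<in>Pow {..<n}. real (hdist x t) \<le> rho * real n}) \<le> 2 powr (bin_entropy rho * real n)"
  using card_vadd_translate[OF assms(3), of "\<lambda>v. real (card v) \<le> rho * real n"]
    card_weight_le[OF assms(1,2), of n]
  by (simp add: hdist_def)

lemma sum_PiE_prod_split:
  fixes g :: "'b \<Rightarrow> ('a \<Rightarrow> 'b) \<Rightarrow> real"
  assumes fin: "finite I" "finite D" and AI: "A \<subseteq> I"
    and dep: "\<And>x c c'. (\<forall>j\<in>I-A. c j = c' j) \<Longrightarrow> g x c = g x c'"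
  shows "(\<Sum>c\<in>PiE I (\<lambda>_. D). \<Prod>i\<in>A. g (c i) c) = (\<Sum>b\<in>PiE (I-A) (\<lambda>_. D). \<Prod>i\<in>A. \<Sum>x\<in>D. g x b)"
proof -
  define merge :: "('a \<Rightarrow> 'b) \<times> ('a \<Rightarrow> 'b) \<Rightarrow> 'a \<Rightarrow> 'b"
    where "merge = (\<lambda>(a, b) i. if i \<in> A then a i else b i)"
  have "(\<Sum>c\<in>PiE I (\<lambda>_. D). \<Prod>i\<in>A. g (c i) c) =
        (\<Sum>(a, b)\<in>PiE A (\<lambda>_. D) \<times> PiE (I-A) (\<lambda>_. D). \<Prod>i\<in>A. g (a i) b)"
  proof (rule sum.reindex_bij_witness[where i = merge and j = "\<lambda>c. (restrict c A, restrict c (I-A))"])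
    fix c assume c: "c \<in> PiE I (\<lambda>_. D)"
    show "merge (restrict c A, restrict c (I-A)) = c"
      using c AI by (auto simp: merge_def PiE_def extensional_def fun_eq_iff)
    show "(restrict c A, restrict c (I-A)) \<in> PiE A (\<lambda>_. D) \<times> PiE (I-A) (\<lambda>_. D)"
      using c AI by auto
    have "g (c i) (restrict c (I-A)) = g (c i) c" for i
      by (rule dep) auto
    then show "(case (restrict c A, restrict c (I-A)) of (a, b) \<Rightarrow> \<Prod>i\<in>A. g (a i) b) = (\<Prod>i\<in>A. g (c i) c)"
      by (auto intro!: prod.cong)
  next
    fix ab assume "ab \<in> PiE A (\<lambda>_. D) \<times> PiE (I-A) (\<lambda>_. D)"
    then show "(restrict (merge ab) A, restrict (merge ab) (I-A)) = ab"
      and "merge ab \<in> PiE I (\<lambda>_. D)"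
      using AI by (auto simp: merge_def PiE_def extensional_def fun_eq_iff Pi_def)
  qed
  also have "\<dots> = (\<Sum>b\<in>PiE (I-A) (\<lambda>_. D). \<Sum>a\<in>PiE A (\<lambda>_. D). \<Prod>i\<in>A. g (a i) b)"
    by (subst sum.cartesian_product[symmetric]) (subst sum.swap, simp)
  also have "\<dots> = (\<Sum>b\<in>PiE (I-A) (\<lambda>_. D). \<Prod>i\<in>A. \<Sum>x\<in>D. g x b)"
    using fin AI finite_subset by (intro sum.cong refl prod_sum_PiE[symmetric]) auto
  finally show ?thesis .
qed

lemma exp_card_eq_prod:
  assumes "finite A"
  shows "exp (real (card {i\<in>A. P i})) = (\<Prod>i\<in>A. if P i then exp 1 else 1)"
proof -
  have "(\<Prod>i\<in>A. if P i then exp 1 else 1 :: real) = (\<Prod>i\<in>{i\<in>A. P i}. exp 1)"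
    using assms by (subst prod.inter_filter[symmetric]) auto
  then show ?thesis
    using exp_of_nat_mult[of "card {i\<in>A. P i}" "1::real"] by simp
qed

lemma sum_exp_indicator_UN_le:
  assumes "finite D" "D \<noteq> {}" "finite J"
  shows "(\<Sum>x\<in>D. if \<exists>j\<in>J. P j x then exp 1 else 1)
         \<le> real (card D) * exp (2 / real (card D) * (\<Sum>j\<in>J. real (card {x\<in>D. P j x})))"
proof -
  define H where "H = {x\<in>D. \<exists>j\<in>J. P j x}"
  have "H = (\<Union>j\<in>J. {x\<in>D. P j x})"
    unfolding H_def by auto
  then have "card H \<le> (\<Sum>j\<in>J. card {x\<in>D. P j x})"
    using assms(3) by (simp add: card_UN_le)
  then have H_le: "real (card H) \<le> (\<Sum>j\<in>J. real (card {x\<in>D. P j x}))"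
    by (simp flip: of_nat_sum)
  have "(\<Sum>x\<in>D. if \<exists>j\<in>J. P j x then exp 1 else 1) = (\<Sum>x\<in>D. 1 + (exp 1 - 1) * of_bool (x \<in> H))"
    unfolding H_def by (intro sum.cong) auto
  also have "\<dots> = real (card D) + (exp 1 - 1) * real (card H)"
    using assms unfolding H_def by (simp add: sum.distrib sum_distrib_left real_card_filter_eq_sum)
  also have "\<dots> \<le> real (card D) + 2 * (\<Sum>j\<in>J. real (card {x\<in>D. P j x}))"
    using exp_le H_le by (intro add_left_mono mult_mono) auto
  also have "\<dots> = real (card D) * (1 + 2 / real (card D) * (\<Sum>j\<in>J. real (card {x\<in>D. P j x})))"
    using assms by (simp add: field_simps)
  also have "\<dots> \<le> real (card D) * exp (2 / real (card D) * (\<Sum>j\<in>J. real (card {x\<in>D. P j x})))"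
    by (intro mult_left_mono) auto
  finally show ?thesis .
qed

lemma sum_exp_le_of_le_half:
  assumes "finite D" "D \<noteq> {}" and f: "\<And>u. u \<in> D \<Longrightarrow> 0 \<le> f u \<and> f u \<le> 1/2"
  shows "(\<Sum>u\<in>D. exp (f u)) \<le> real (card D) * exp (2 * (\<Sum>u\<in>D. f u) / real (card D))"
proof -
  have "(\<Sum>u\<in>D. exp (f u)) \<le> (\<Sum>u\<in>D. 1 + 2 * f u)"
    using f by (intro sum_mono real_exp_bound_lemma) auto
  also have "\<dots> = real (card D) + 2 * (\<Sum>u\<in>D. f u)"
    by (simp add: sum.distrib sum_distrib_left)
  also have "\<dots> = real (card D) * (1 + 2 * (\<Sum>u\<in>D. f u) / real (card D))"
    using assms by (simp add: field_simps)
  also have "\<dots> \<le> real (card D) * exp (2 * (\<Sum>u\<in>D. f u) / real (card D))"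
    by (intro mult_left_mono) auto
  finally show ?thesis .
qed

lemma sum_card_slice_le:
  assumes S: "S \<subseteq> {..<n}"
    and deg: "\<And>x. x \<in> Pow {..<n} \<Longrightarrow> real (card {u\<in>Pow {..<n}. Q u x}) \<le> V"
  shows "(\<Sum>u\<in>Pow {..<n}. real (card {x\<in>Pow {..<n}. x \<inter> S = y \<and> Q u x})) \<le> 2^n / 2^card S * V"
proof -
  define Y where "Y = {x\<in>Pow {..<n}. x \<inter> S = y}"
  have finY: "finite Y"
    unfolding Y_def by simp
  have "0 \<le> V"
    using deg[of "{}"] by (auto intro: order_trans[rotated])
  have "(\<Sum>u\<in>Pow {..<n}. real (card {x\<in>Pow {..<n}. x \<inter> S = y \<and> Q u x}))
      = (\<Sum>u\<in>Pow {..<n}. \<Sum>x\<in>Y. of_bool (Q u x))"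
  proof (intro sum.cong refl)
    fix u
    have "{x\<in>Pow {..<n}. x \<inter> S = y \<and> Q u x} = {x\<in>Y. Q u x}"
      unfolding Y_def by auto
    then show "real (card {x\<in>Pow {..<n}. x \<inter> S = y \<and> Q u x}) = (\<Sum>x\<in>Y. of_bool (Q u x))"
      using real_card_filter_eq_sum[OF finY] by simp
  qed
  also have "\<dots> = (\<Sum>x\<in>Y. real (card {u\<in>Pow {..<n}. Q u x}))"
    by (subst sum.swap) (simp add: Int_def)
  also have "\<dots> \<le> real (card Y) * V"
    using sum_mono[of Y _ "\<lambda>_. V"] deg by (auto simp: Y_def)
  also have "\<dots> \<le> 2^n / 2^card S * V"
    using card_Pow_slice[OF S] \<open>0 \<le> V\<close> unfolding Y_def by (intro mult_right_mono)
  finally show ?thesis .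
qed

lemma sum_exp_card_slice_le:
  fixes Q :: "nat set \<Rightarrow> nat set \<Rightarrow> bool" and \<beta> V :: real
  assumes S: "S \<subseteq> {..<n}"
    and deg_left: "\<And>u. u \<in> Pow {..<n} \<Longrightarrow> real (card {x\<in>Pow {..<n}. Q u x}) \<le> V"
    and deg_right: "\<And>x. x \<in> Pow {..<n} \<Longrightarrow> real (card {u\<in>Pow {..<n}. Q u x}) \<le> V"
    and \<beta>: "0 \<le> \<beta>" "\<beta> * V \<le> 1/2"
  shows "(\<Sum>u\<in>Pow {..<n}. exp (\<beta> * real (card {x\<in>Pow {..<n}. x \<inter> S = y \<and> Q u x})))
         \<le> 2^n * exp (2 * \<beta> * V / 2^card S)"
proof -
  define \<phi> where "\<phi> = (\<lambda>u. real (card {x\<in>Pow {..<n}. x \<inter> S = y \<and> Q u x}))"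
  have "\<beta> * \<phi> u \<le> 1/2" if "u \<in> Pow {..<n}" for u
  proof -
    have "card {x\<in>Pow {..<n}. x \<inter> S = y \<and> Q u x} \<le> card {x\<in>Pow {..<n}. Q u x}"
      by (rule card_mono) auto
    then have "\<phi> u \<le> V"
      using deg_left[OF that] unfolding \<phi>_def by linarith
    then show ?thesis
      using \<beta> by (meson mult_left_mono order_trans)
  qed
  then have "(\<Sum>u\<in>Pow {..<n}. exp (\<beta> * \<phi> u)) \<le> 2^n * exp (2 * (\<Sum>u\<in>Pow {..<n}. \<beta> * \<phi> u) / 2^n)"
    using sum_exp_le_of_le_half[of "Pow {..<n}" "\<lambda>u. \<beta> * \<phi> u"] \<beta>(1)
    by (auto simp: \<phi>_def card_Pow)
  also have "2 * (\<Sum>u\<in>Pow {..<n}. \<beta> * \<phi> u) / 2^n \<le> 2 * \<beta> * V / 2^card S"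
  proof -
    have "(\<Sum>u\<in>Pow {..<n}. \<phi> u) \<le> 2^n / 2^card S * V"
      using sum_card_slice_le[OF S deg_right] unfolding \<phi>_def .
    then have "\<beta> * (\<Sum>u\<in>Pow {..<n}. \<phi> u) \<le> \<beta> * (2^n / 2^card S * V)"
      using \<beta>(1) by (rule mult_left_mono)
    then show ?thesis
      by (simp add: sum_distrib_left[symmetric] field_simps)
  qed
  finally show ?thesis
    unfolding \<phi>_def by simp
qed

text \<open>For a fixed part \<open>A\<close> of the code, conditioning on the codewords outside \<open>A\<close> makes the
  indicators for \<open>i \<in> A\<close> independent; each then has mean at most \<open>2\<^sup>-\<^sup>n\<close> times the number
  of words \<open>Q\<close>-related to one of the outside codewords.\<close>

lemma sum_exp_card_hits_le:
  fixes Q :: "nat set \<Rightarrow> nat set \<Rightarrow> bool" and n M :: nat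
  defines "D \<equiv> Pow {..<n}"
  assumes A: "A \<subseteq> {..<M}"
  shows "(\<Sum>c\<in>PiE {..<M} (\<lambda>_. D).
            exp (real (card {i\<in>A. c i \<inter> S = y \<and> (\<exists>j\<in>{..<M}-A. Q (c j) (c i))})))
         \<le> (2^n) ^ card A * (\<Sum>b\<in>PiE ({..<M}-A) (\<lambda>_. D). \<Prod>j\<in>{..<M}-A.
              exp (2 * real (card A) / 2^n * real (card {x\<in>D. x \<inter> S = y \<and> Q (b j) x})))"
proof -
  define N :: real where "N = 2^n"
  define A' where "A' = {..<M} - A"
  define hit where "hit = (\<lambda>x c. \<exists>j\<in>A'. x \<inter> S = y \<and> Q (c j) x)"
  define g where "g = (\<lambda>x c. if hit x c then exp 1 else (1::real))"
  define \<phi> where "\<phi> = (\<lambda>u. real (card {x\<in>D. x \<inter> S = y \<and> Q u x}))"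
  have finD: "finite D" and D_ne: "D \<noteq> {}" and cardD: "real (card D) = N"
    unfolding D_def N_def by (auto simp: card_Pow)
  have finA: "finite A" "finite A'"
    using A finite_subset unfolding A'_def by auto
  have inner: "(\<Sum>x\<in>D. g x b) \<le> N * exp (2 / N * (\<Sum>j\<in>A'. \<phi> (b j)))" for b
    using sum_exp_indicator_UN_le[OF finD D_ne finA(2), of "\<lambda>j x. x \<inter> S = y \<and> Q (b j) x"]
    unfolding g_def hit_def \<phi>_def cardD .
  have "(\<Sum>c\<in>PiE {..<M} (\<lambda>_. D).
           exp (real (card {i\<in>A. c i \<inter> S = y \<and> (\<exists>j\<in>{..<M}-A. Q (c j) (c i))})))
      = (\<Sum>c\<in>PiE {..<M} (\<lambda>_. D). \<Prod>i\<in>A. g (c i) c)"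
    unfolding g_def hit_def A'_def using finA by (simp add: exp_card_eq_prod)
  also have "\<dots> = (\<Sum>b\<in>PiE A' (\<lambda>_. D). \<Prod>i\<in>A. \<Sum>x\<in>D. g x b)"
    unfolding A'_def
    by (rule sum_PiE_prod_split) (use finD A in \<open>auto simp: g_def hit_def A'_def\<close>)
  also have "\<dots> \<le> (\<Sum>b\<in>PiE A' (\<lambda>_. D). \<Prod>i\<in>A. N * exp (2 / N * (\<Sum>j\<in>A'. \<phi> (b j))))"
    by (intro sum_mono prod_mono conjI sum_nonneg inner) (auto simp: g_def)
  also have "\<dots> = N ^ card A * (\<Sum>b\<in>PiE A' (\<lambda>_. D). \<Prod>j\<in>A'. exp (2 * real (card A) / N * \<phi> (b j)))"
  proof (subst sum_distrib_left, intro sum.cong refl)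
    fix b :: "nat \<Rightarrow> nat set"
    have "real (card A) * (2 / N * (\<Sum>j\<in>A'. \<phi> (b j))) = (\<Sum>j\<in>A'. 2 * real (card A) / N * \<phi> (b j))"
      by (simp add: sum_distrib_left mult_ac)
    then show "(\<Prod>i\<in>A. N * exp (2 / N * (\<Sum>j\<in>A'. \<phi> (b j))))
        = N ^ card A * (\<Prod>j\<in>A'. exp (2 * real (card A) / N * \<phi> (b j)))"
      by (simp add: power_mult_distrib exp_of_nat_mult[symmetric] exp_sum finA)
  qed
  finally show ?thesis
    unfolding N_def A'_def \<phi>_def .
qed

lemma exp_moment_confusable_le:
  fixes Q :: "nat set \<Rightarrow> nat set \<Rightarrow> bool" and n M :: nat and V :: real
  defines "D \<equiv> Pow {..<n}"
  assumes S: "S \<subseteq> {..<n}" and A: "A \<subseteq> {..<M}"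
    and deg_left: "\<And>u. u \<in> D \<Longrightarrow> real (card {x\<in>D. Q u x}) \<le> V"
    and deg_right: "\<And>x. x \<in> D \<Longrightarrow> real (card {u\<in>D. Q u x}) \<le> V"
    and small: "4 * real M * V \<le> 2^n"
  shows "(\<Sum>c\<in>PiE {..<M} (\<lambda>_. D).
            exp (real (card {i\<in>A. c i \<inter> S = y \<and> (\<exists>j\<in>{..<M}-A. Q (c j) (c i))})))
         \<le> (2^n)^M * exp (4 * real M ^ 2 * V / (2^n * 2^card S))"
proof -
  define N :: real where "N = 2^n"
  define A' where "A' = {..<M} - A"
  define \<beta> where "\<beta> = 2 * real (card A) / N"
  have N_pos: "0 < N"
    unfolding N_def by simp
  have finA: "finite A" "finite A'"
    using A finite_subset unfolding A'_def by auto
  have cardAA: "card A + card A' = M"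
    using A finA card_mono[OF _ A] unfolding A'_def by (simp add: card_Diff_subset)
  have V_nonneg: "0 \<le> V"
    using deg_left[of "{}"] unfolding D_def by (auto intro: order_trans[rotated])
  have \<beta>: "0 \<le> \<beta>" "\<beta> * V \<le> 1/2"
  proof -
    have "\<beta> \<le> 2 * real M / N"
      using N_pos cardAA unfolding \<beta>_def by (auto simp: divide_right_mono)
    then have "\<beta> * V \<le> 2 * real M / N * V"
      using V_nonneg by (rule mult_right_mono)
    also have "\<dots> \<le> 1/2"
      using small N_pos unfolding N_def by (simp add: field_simps)
    finally show "\<beta> * V \<le> 1/2" .
  qed (use N_pos in \<open>simp add: \<beta>_def\<close>)
  have "(\<Sum>c\<in>PiE {..<M} (\<lambda>_. D).
           exp (real (card {i\<in>A. c i \<inter> S = y \<and> (\<exists>j\<in>{..<M}-A. Q (c j) (c i))})))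
      \<le> N ^ card A * (\<Sum>b\<in>PiE A' (\<lambda>_. D). \<Prod>j\<in>A'.
           exp (\<beta> * real (card {x\<in>D. x \<inter> S = y \<and> Q (b j) x})))"
    using sum_exp_card_hits_le[OF A, where n = n and S = S and y = y and Q = Q] unfolding D_def N_def A'_def \<beta>_def .
  also have "\<dots> = N ^ card A * (\<Prod>j\<in>A'. \<Sum>u\<in>D. exp (\<beta> * real (card {x\<in>D. x \<inter> S = y \<and> Q u x})))"
    by (subst prod_sum_PiE) (auto simp: finA D_def)
  also have "\<dots> \<le> N ^ card A * (\<Prod>j\<in>A'. N * exp (2 * \<beta> * V / 2^card S))"
    using sum_exp_card_slice_le[OF S deg_left[unfolded D_def] deg_right[unfolded D_def] \<beta>, of y]
    by (intro mult_left_mono prod_mono conjI sum_nonneg) (auto simp: D_def N_def)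
  also have "\<dots> = N ^ M * exp (4 * (real (card A) * real (card A')) * V / (N * 2^card S))"
    unfolding cardAA[symmetric] \<beta>_def
    by (simp add: power_mult_distrib power_add exp_of_nat_mult[symmetric] field_simps)
  also have "\<dots> \<le> N ^ M * exp (4 * real M ^ 2 * V / (N * 2^card S))"
  proof -
    have "real (card A) * real (card A') \<le> real M * real M"
      using cardAA by (intro mult_mono) auto
    then have "4 * (real (card A) * real (card A')) * V / (N * 2^card S) \<le> 4 * real M ^ 2 * V / (N * 2^card S)"
      using V_nonneg N_pos by (intro divide_right_mono mult_right_mono) (auto simp: power2_eq_square)
    then show ?thesis
      using N_pos by simp
  qed
  finally show ?thesis
    unfolding N_def .
qed

lemma card_exp_tail_le:
  assumes "finite \<Omega>" and moment: "(\<Sum>c\<in>\<Omega>. exp (X c)) \<le> B"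
  shows "real (card {c\<in>\<Omega>. a < X c}) \<le> B * exp (- a)"
proof -
  have "real (card {c\<in>\<Omega>. a < X c}) * exp a \<le> (\<Sum>c\<in>{c\<in>\<Omega>. a < X c}. exp (X c))"
    using sum_mono[of "{c\<in>\<Omega>. a < X c}" "\<lambda>_. exp a" "\<lambda>c. exp (X c)"] by auto
  also have "\<dots> \<le> (\<Sum>c\<in>\<Omega>. exp (X c))"
    using assms(1) by (intro sum_mono2) auto
  finally show ?thesis
    using moment by (simp add: exp_minus field_simps)
qed

definition bit_class :: "nat \<Rightarrow> nat \<Rightarrow> bool \<Rightarrow> nat set" where
  "bit_class M b v = {i\<in>{..<M}. bit i b = v}"

definition confusable ::
  "real \<Rightarrow> nat \<Rightarrow> nat \<Rightarrow> (nat \<Rightarrow> nat set) \<Rightarrow> nat set \<Rightarrow> nat set \<Rightarrow> nat set \<Rightarrow> nat set \<Rightarrow> nat set" where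
  "confusable rho_w n M c S y e A =
     {i\<in>A. c i \<inter> S = y \<and> (\<exists>j\<in>{..<M}-A. real (hdist (c j) (vadd (c i) e)) \<le> rho_w * real n)}"

lemma measure_pmf_eq_sum_indicator:
  assumes "finite D" "set_pmf p \<subseteq> D"
  shows "measure_pmf.prob p X = (\<Sum>e\<in>D. pmf p e * of_bool (e \<in> X))"
proof -
  have "measure_pmf.prob p X = measure_pmf.prob p (X \<inter> D)"
    using assms(2) by (intro measure_eq_AE) (auto simp: AE_measure_pmf_iff)
  also have "\<dots> = (\<Sum>e\<in>D. pmf p e * of_bool (e \<in> X))"
    using assms(1) by (simp add: measure_measure_pmf_finite Int_commute Int_def)
  finally show ?thesis .
qed

lemma card_decoding_errors_le:
  fixes c :: "nat \<Rightarrow> nat set"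
  assumes M: "M \<le> 2^n"
    and bounded: "\<And>b v. b < n \<Longrightarrow> real (card (confusable rho_w n M c S y e (bit_class M b v))) \<le> a"
  shows "real (card {i\<in>{..<M}. c i \<inter> S = y \<and> decoding_error rho_w n M c i e}) \<le> 2 * real n * a"
proof -
  let ?X = "\<lambda>b v. confusable rho_w n M c S y e (bit_class M b v)"
  have "{i\<in>{..<M}. c i \<inter> S = y \<and> decoding_error rho_w n M c i e} \<subseteq> (\<Union>b<n. \<Union>v. ?X b v)"
  proof
    fix i assume "i \<in> {i\<in>{..<M}. c i \<inter> S = y \<and> decoding_error rho_w n M c i e}"
    then obtain j where ij: "i < M" "c i \<inter> S = y" "j < M" "c j \<noteq> c i"
       "real (hdist (c j) (vadd (c i) e)) \<le> rho_w * real n"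
      unfolding decoding_error_def by auto
    then obtain b where "b < n" "bit i b \<noteq> bit j b"
      using exists_bit_neq[of i n j] M by fastforce
    then have "i \<in> ?X b (bit i b)"
      using ij unfolding confusable_def bit_class_def by auto
    then show "i \<in> (\<Union>b<n. \<Union>v. ?X b v)"
      using \<open>b < n\<close> by blast
  qed
  then have "card {i\<in>{..<M}. c i \<inter> S = y \<and> decoding_error rho_w n M c i e} \<le> card (\<Union>b<n. \<Union>v. ?X b v)"
    by (rule card_mono[rotated]) (auto simp: confusable_def bit_class_def)
  also have "\<dots> \<le> (\<Sum>b<n. \<Sum>v\<in>UNIV. card (?X b v))"
    by (intro order_trans[OF card_UN_le] sum_mono card_UN_le) auto
  finally have "real (card {i\<in>{..<M}. c i \<inter> S = y \<and> decoding_error rho_w n M c i e})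
      \<le> (\<Sum>b<n. \<Sum>v\<in>UNIV. real (card (?X b v)))"
    by (simp flip: of_nat_sum)
  also have "\<dots> \<le> (\<Sum>b<n. \<Sum>v\<in>(UNIV :: bool set). a)"
    using bounded by (intro sum_mono) auto
  also have "\<dots> = 2 * real n * a"
    by (simp add: UNIV_bool)
  finally show ?thesis .
qed

lemma sum_prob_decoding_error_slice_le:
  fixes c :: "nat \<Rightarrow> nat set" and p :: "nat set pmf"
  assumes M: "M \<le> 2^n" and "0 \<le> a" and supp: "set_pmf p \<subseteq> Pow {..<n}"
    and bounded: "\<And>e b v. e \<subseteq> {..<n} \<Longrightarrow> b < n \<Longrightarrow>
                     real (card (confusable rho_w n M c S y e (bit_class M b v))) \<le> a"
  shows "(\<Sum>i\<in>{i\<in>{..<M}. c i \<inter> S = y}. measure_pmf.prob p {e. decoding_error rho_w n M c i e})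
         \<le> 2 * real n * a"
proof -
  let ?I = "{i\<in>{..<M}. c i \<inter> S = y}"
  have "(\<Sum>i\<in>?I. measure_pmf.prob p {e. decoding_error rho_w n M c i e})
      = (\<Sum>e\<in>Pow {..<n}. pmf p e * (\<Sum>i\<in>?I. of_bool (decoding_error rho_w n M c i e)))"
    unfolding measure_pmf_eq_sum_indicator[OF finite_Pow_iff[THEN iffD2, OF finite_lessThan] supp]
    by (subst sum.swap) (simp add: sum_distrib_left mult.commute)
  also have "\<dots> \<le> (\<Sum>e\<in>Pow {..<n}. pmf p e * (2 * real n * a))"
  proof (intro sum_mono mult_left_mono)
    fix e assume "e \<in> Pow {..<n}"
    have "(\<Sum>i\<in>?I. of_bool (decoding_error rho_w n M c i e))
        = real (card {i\<in>{..<M}. c i \<inter> S = y \<and> decoding_error rho_w n M c i e})"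
      by (simp add: Int_def conj_assoc)
    also have "\<dots> \<le> 2 * real n * a"
      using \<open>e \<in> Pow {..<n}\<close> by (intro card_decoding_errors_le M bounded) auto
    finally show "(\<Sum>i\<in>?I. of_bool (decoding_error rho_w n M c i e)) \<le> 2 * real n * a" .
  qed simp
  also have "\<dots> = measure_pmf.prob p (Pow {..<n}) * (2 * real n * a)"
    by (simp add: measure_measure_pmf_finite sum_distrib_right)
  also have "\<dots> \<le> 2 * real n * a"
    using \<open>0 \<le> a\<close> by (simp add: mult_left_le_one_le)
  finally show ?thesis .
qed

text \<open>The error distribution depends on \<open>i\<close> only through the read symbols \<open>c i \<inter> S\<close>, so the
  transmitted indices are grouped by these \<open>2\<^bsup>|S|\<^esup>\<close> values.\<close>

lemma error_prob_le_of_confusable_le: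
  fixes c :: "nat \<Rightarrow> nat set"
  assumes M: "0 < M" "M \<le> 2^n" and "0 \<le> t"
    and adv: "admissible_adversary rho_r rho_w n S E"
    and bounded: "\<And>y e b v. y \<subseteq> {..<n} \<Longrightarrow> e \<subseteq> {..<n} \<Longrightarrow> b < n \<Longrightarrow>
                     real (card (confusable rho_w n M c S y e (bit_class M b v))) \<le> real M * t / 2^card S"
  shows "error_prob rho_w n M c S E \<le> 2 * real n * t"
proof -
  define a where "a = real M * t / 2^card S"
  have S: "S \<subseteq> {..<n}" and supp: "\<And>y. set_pmf (E y) \<subseteq> Pow {..<n}"
    using adv unfolding admissible_adversary_def by auto
  have finS: "finite S"
    using S finite_subset by auto
  define f where "f = (\<lambda>i. measure_pmf.prob (E (c i \<inter> S)) {e. decoding_error rho_w n M c i e})"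
  have "(\<Sum>i<M. f i) = (\<Sum>y\<in>Pow S. \<Sum>i\<in>{i\<in>{..<M}. c i \<inter> S = y}. f i)"
    by (rule sum.group[symmetric]) (use finS in auto)
  also have "\<dots> = (\<Sum>y\<in>Pow S. \<Sum>i\<in>{i\<in>{..<M}. c i \<inter> S = y}.
                       measure_pmf.prob (E y) {e. decoding_error rho_w n M c i e})"
    unfolding f_def by (intro sum.cong refl) auto
  also have "\<dots> \<le> (\<Sum>y\<in>Pow S. 2 * real n * a)"
    using M \<open>0 \<le> t\<close> S supp bounded unfolding a_def
    by (intro sum_mono sum_prob_decoding_error_slice_le) auto
  also have "\<dots> = real M * (2 * real n * t)"
    using finS by (simp add: card_Pow a_def)
  finally show ?thesis
    unfolding error_prob_def f_def using M by (simp add: field_simps)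
qed

lemma prob_pmf_of_set_ge_union_bound:
  assumes fin: "finite \<Omega>" "\<Omega> \<noteq> {}" "finite P"
    and bad: "\<And>q. q \<in> P \<Longrightarrow> real (card {c\<in>\<Omega>. B q c}) \<le> real (card \<Omega>) * t"
    and good: "\<And>c. c \<in> \<Omega> \<Longrightarrow> \<forall>q\<in>P. \<not> B q c \<Longrightarrow> c \<in> G"
  shows "1 - real (card P) * t \<le> measure_pmf.prob (pmf_of_set \<Omega>) G"
proof -
  define Bad where "Bad = (\<Union>q\<in>P. {c\<in>\<Omega>. B q c})"
  have "real (card Bad) \<le> (\<Sum>q\<in>P. real (card {c\<in>\<Omega>. B q c}))"
    unfolding Bad_def by (metis (no_types) card_UN_le fin(3) of_nat_le_iff of_nat_sum)
  also have "\<dots> \<le> real (card P) * (real (card \<Omega>) * t)"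
    using sum_mono[OF bad] by simp
  finally have card_Bad: "real (card Bad) \<le> real (card \<Omega>) * (real (card P) * t)"
    by (simp add: mult_ac)
  have "Bad \<subseteq> \<Omega>" "\<Omega> - Bad \<subseteq> \<Omega> \<inter> G"
    using good unfolding Bad_def by auto
  then have "card \<Omega> - card Bad \<le> card (\<Omega> \<inter> G)" "card Bad \<le> card \<Omega>"
    using fin card_mono[of "\<Omega> \<inter> G" "\<Omega> - Bad"] by (auto simp: card_Diff_subset finite_subset card_mono)
  then have "real (card \<Omega>) - real (card Bad) \<le> real (card (\<Omega> \<inter> G))"
    by (metis of_nat_diff of_nat_mono)
  then have "1 - real (card P) * t \<le> real (card (\<Omega> \<inter> G)) / real (card \<Omega>)"
    using card_Bad fin by (simp add: field_simps card_gt_0_iff)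
  also have "\<dots> = measure_pmf.prob (pmf_of_set \<Omega>) G"
    using fin by (simp add: measure_pmf_of_set Int_commute)
  finally show ?thesis .
qed

lemma chernoff_exponent_le:
  fixes p s N M V :: real
  assumes "8 \<le> p" "0 < s" "0 < N" and MV: "M * V \<le> N / p^2" and Ms: "p^2 * s \<le> 2 * M"
  shows "4 * M^2 * V / (N * s) - M / (p * s) \<le> - p / 4"
proof -
  have M: "0 \<le> M"
    using Ms assms(2) by (smt (verit) zero_le_power2 mult_nonneg_nonneg)
  have "4 * M^2 * V / (N * s) = (M / s) * (4 * (M * V) / N)"
    by (simp add: power2_eq_square mult_ac)
  also have "\<dots> \<le> (M / s) * (4 / p^2)"
    using MV assms M by (intro mult_left_mono) (auto simp: field_simps)
  also have "\<dots> \<le> (M / s) * (1 / (2 * p))"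
    using assms M by (intro mult_left_mono) (auto simp: field_simps power2_eq_square)
  finally have "4 * M^2 * V / (N * s) - M / (p * s) \<le> - (M / (2 * p * s))"
    by (simp add: field_simps)
  also have "\<dots> \<le> - p / 4"
    using Ms assms by (simp add: field_simps power2_eq_square)
  finally show ?thesis .
qed

lemma card_confusable_large_le:
  fixes n M :: nat and p :: real
  defines "\<Omega> \<equiv> PiE {..<M} (\<lambda>_. Pow {..<n})"
  assumes S: "S \<subseteq> {..<n}" and e: "e \<subseteq> {..<n}" and rho_w: "0 < rho_w" "rho_w \<le> 1/2"
    and p: "8 \<le> p" and MV: "real M * 2 powr (bin_entropy rho_w * real n) \<le> 2^n / p^2"
    and Ms: "p^2 * 2^card S \<le> 2 * real M"
  shows "real (card {c\<in>\<Omega>. real M / (p * 2^card S)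
                              < real (card (confusable rho_w n M c S y e (bit_class M b v)))})
         \<le> real (card \<Omega>) * exp (- p / 4)"
proof -
  define V where "V = 2 powr (bin_entropy rho_w * real n)"
  define Q where "Q = (\<lambda>u x. real (hdist u (vadd x e)) \<le> rho_w * real n)"
  have vadd_e: "vadd x e \<subseteq> {..<n}" if "x \<in> Pow {..<n}" for x
    using vadd_subset[OF _ e] that by auto
  have deg_left: "real (card {x\<in>Pow {..<n}. Q u x}) \<le> V" if "u \<in> Pow {..<n}" for u
    unfolding Q_def V_def hdist_vadd_swap[of u] by (rule card_hamming_ball_le[OF rho_w vadd_e[OF that]])
  have deg_right: "real (card {u\<in>Pow {..<n}. Q u x}) \<le> V" if "x \<in> Pow {..<n}" for x
    unfolding Q_def V_def by (rule card_hamming_ball_le[OF rho_w vadd_e[OF that]])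
  have small: "4 * real M * V \<le> 2^n"
  proof -
    have "4 * real M * V \<le> 4 * (2^n / p^2)"
      using MV unfolding V_def by simp
    also have "\<dots> \<le> 2^n"
      using p by (simp add: field_simps power2_eq_square order_trans[OF _ mult_mono[OF p p]])
    finally show ?thesis .
  qed
  have moment: "(\<Sum>c\<in>\<Omega>. exp (real (card (confusable rho_w n M c S y e (bit_class M b v)))))
      \<le> real (card \<Omega>) * exp (4 * real M ^ 2 * V / (2^n * 2^card S))"
    using exp_moment_confusable_le[OF S _ deg_left deg_right small, of "bit_class M b v" y]
    unfolding \<Omega>_def confusable_def Q_def by (simp add: bit_class_def card_PiE card_Pow subset_eq)
  have "real (card {c\<in>\<Omega>. real M / (p * 2^card S)
                            < real (card (confusable rho_w n M c S y e (bit_class M b v)))})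
      \<le> real (card \<Omega>) * exp (4 * real M ^ 2 * V / (2^n * 2^card S)) * exp (- (real M / (p * 2^card S)))"
    by (rule card_exp_tail_le[OF _ moment]) (simp add: \<Omega>_def finite_PiE)
  also have "\<dots> \<le> real (card \<Omega>) * exp (- p / 4)"
  proof -
    have "4 * real M ^ 2 * V / (2^n * 2^card S) - real M / (p * 2^card S) \<le> - p / 4"
      using p MV Ms unfolding V_def by (intro chernoff_exponent_le) auto
    then show ?thesis
      by (simp add: mult.assoc exp_add[symmetric] mult_left_mono)
  qed
  finally show ?thesis .
qed

lemma prob_random_code_good:
  fixes n M :: nat and p :: real
  assumes rho_w: "0 < rho_w" "rho_w \<le> 1/2" and p: "8 \<le> p"
    and M: "0 < M" "M \<le> 2^n"
    and MV: "real M * 2 powr (bin_entropy rho_w * real n) \<le> 2^n / p^2"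
    and Ms: "p^2 * 2 powr (rho_r * real n) \<le> 2 * real M"
  shows "1 - 2 * real n * 8^n * exp (- p / 4)
         \<le> measure_pmf.prob (random_code M n)
             {c. \<forall>S E. admissible_adversary rho_r rho_w n S E \<longrightarrow>
                   error_prob rho_w n M c S E \<le> 2 * real n / p}"
    (is "_ \<le> measure_pmf.prob _ ?G")
proof -
  define \<Omega> where "\<Omega> = PiE {..<M} (\<lambda>_. Pow {..<n})"
  define P where "P = {S\<in>Pow {..<n}. real (card S) \<le> rho_r * real n}
                      \<times> Pow {..<n} \<times> Pow {..<n} \<times> {..<n} \<times> (UNIV :: bool set)"
  define large where "large = (\<lambda>(S, y, e, b, v) c. real M / (p * 2^card S)
                        < real (card (confusable rho_w n M c S y e (bit_class M b v))))"
  have "card P \<le> card (Pow {..<n} \<times> Pow {..<n} \<times> Pow {..<n} \<times> {..<n} \<times> (UNIV :: bool set))"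
    unfolding P_def by (intro card_mono) auto
  also have "\<dots> = 2 * n * 8^n"
    using power_mult_distrib[of "2::nat" 4 n] power_mult_distrib[of "2::nat" 2 n]
    by (simp add: card_cartesian_product card_Pow UNIV_bool)
  finally have card_P: "real (card P) \<le> 2 * real n * 8^n"
    using of_nat_mono[where 'a = real] by fastforce
  have "1 - real (card P) * exp (- p / 4) \<le> measure_pmf.prob (pmf_of_set \<Omega>) ?G"
  proof (rule prob_pmf_of_set_ge_union_bound[where B = large])
    show "finite \<Omega>" "\<Omega> \<noteq> {}" "finite P"
      unfolding \<Omega>_def P_def by (auto simp: PiE_eq_empty_iff finite_PiE)
  next
    fix q assume "q \<in> P"
    then obtain S y e b v where q: "q = (S, y, e, b, v)" and S: "S \<subseteq> {..<n}"
      "real (card S) \<le> rho_r * real n" and e: "e \<subseteq> {..<n}"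
      unfolding P_def by auto
    have "p^2 * 2^card S \<le> p^2 * 2 powr (rho_r * real n)"
      using S(2) by (intro mult_left_mono) (auto simp flip: powr_realpow)
    then show "real (card {c\<in>\<Omega>. large q c}) \<le> real (card \<Omega>) * exp (- p / 4)"
      unfolding q large_def \<Omega>_def prod.case
      using Ms by (intro card_confusable_large_le[OF S(1) e rho_w p MV]) auto
  next
    fix c assume "c \<in> \<Omega>" and small: "\<forall>q\<in>P. \<not> large q c"
    show "c \<in> ?G"
    proof (intro CollectI allI impI)
      fix S E assume adv: "admissible_adversary rho_r rho_w n S E"
      then have "S \<in> {S\<in>Pow {..<n}. real (card S) \<le> rho_r * real n}"
        unfolding admissible_adversary_def by auto
      then show "error_prob rho_w n M c S E \<le> 2 * real n / p"
        using small p M by (intro error_prob_le_of_confusable_le[OF M _ adv, of "1 / p", simplified])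
          (auto simp: P_def large_def not_less)
    qed
  qed
  moreover have "real (card P) * exp (- p / 4) \<le> 2 * real n * 8^n * exp (- p / 4)"
    using card_P by (intro mult_right_mono) auto
  ultimately show ?thesis
    unfolding random_code_def \<Omega>_def by linarith
qed

lemma code_size_bounds:
  assumes "0 < R" "R \<le> 1"
  shows "2 powr (R * real n) \<le> 2 * real (code_size R n)"
    and "real (code_size R n) \<le> 2 powr (R * real n)"
    and "0 < code_size R n"
    and "code_size R n \<le> 2^n"
proof -
  define x where "x = 2 powr (R * real n)"
  have "1 \<le> x"
    unfolding x_def using assms by (simp add: ge_one_powr_ge_zero)
  then have M: "real (code_size R n) = of_int \<lfloor>x\<rfloor>" "1 \<le> \<lfloor>x\<rfloor>"
    unfolding code_size_def x_def by auto
  then show "2 powr (R * real n) \<le> 2 * real (code_size R n)"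
    and upper: "real (code_size R n) \<le> 2 powr (R * real n)"
    unfolding x_def[symmetric] by linarith+
  show "0 < code_size R n"
    using M by linarith
  have "2 powr (R * real n) \<le> 2 powr real n"
    using assms by (intro powr_mono) (auto simp: mult_left_le_one_le)
  then have "2 powr (R * real n) \<le> 2^n"
    by (simp add: powr_realpow)
  then have "real (code_size R n) \<le> 2^n"
    using upper by linarith
  then show "code_size R n \<le> 2^n"
    by (metis of_nat_le_iff of_nat_numeral of_nat_power)
qed

lemma code_size_parameters:
  fixes n :: nat
  assumes rho_w: "0 < rho_w" "rho_w < 1/2" and "0 < eps" "0 < rho_r"
    and R: "R = 1 - bin_entropy rho_w - eps" "rho_r + eps \<le> R"
  defines "M \<equiv> code_size R n" and "p \<equiv> 2 powr (eps * real n / 2)"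
  shows "0 < M" "M \<le> 2^n"
    and "real M * 2 powr (bin_entropy rho_w * real n) \<le> 2^n / p^2"
    and "p^2 * 2 powr (rho_r * real n) \<le> 2 * real M"
proof -
  have "0 < R" "R \<le> 1"
    using R assms(3,4) bin_entropy_nonneg[of rho_w] rho_w by auto
  note bounds = code_size_bounds[OF this, of n, folded M_def]
  show "0 < M" "M \<le> 2^n"
    using bounds by auto
  have p2: "p^2 = 2 powr (eps * real n)"
    unfolding p_def by (simp add: power2_eq_square powr_add[symmetric])
  have "real M * 2 powr (bin_entropy rho_w * real n) \<le> 2 powr (R * real n) * 2 powr (bin_entropy rho_w * real n)"
    using bounds by (intro mult_right_mono) auto
  also have "\<dots> = 2 powr real n / p^2"
    unfolding p2 R(1) by (simp add: powr_add[symmetric] powr_diff[symmetric] algebra_simps)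
  finally show "real M * 2 powr (bin_entropy rho_w * real n) \<le> 2^n / p^2"
    by (simp add: powr_realpow)
  have "p^2 * 2 powr (rho_r * real n) = 2 powr ((rho_r + eps) * real n)"
    unfolding p2 by (simp add: powr_add[symmetric] algebra_simps)
  also have "\<dots> \<le> 2 powr (R * real n)"
    using R(2) by (intro powr_mono mult_right_mono) auto
  finally show "p^2 * 2 powr (rho_r * real n) \<le> 2 * real M"
    using bounds by linarith
qed

lemma prob_code_size_good:
  fixes n :: nat and eps :: real
  defines "p \<equiv> 2 powr (eps * real n / 2)"
  defines "d \<equiv> 2 * real n / p + 2 * real n * 8^n * exp (- p / 4)"
  assumes "0 < rho_w" "rho_w < 1/2" "0 < eps" "0 < rho_r"
    and "R = 1 - bin_entropy rho_w - eps" "rho_r + eps \<le> R" and "8 \<le> p"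
  shows "1 - d \<le> measure_pmf.prob (random_code (code_size R n) n)
                   {c. \<forall>S E. admissible_adversary rho_r rho_w n S E \<longrightarrow>
                          error_prob rho_w n (code_size R n) c S E \<le> d}"
proof -
  let ?good = "\<lambda>d. {c. \<forall>S E. admissible_adversary rho_r rho_w n S E \<longrightarrow>
                           error_prob rho_w n (code_size R n) c S E \<le> d}"
  have "1 - 2 * real n * 8^n * exp (- p / 4)
      \<le> measure_pmf.prob (random_code (code_size R n) n) (?good (2 * real n / p))"
    using code_size_parameters[OF assms(3-8), of n, folded p_def] assms(3,4,9)
    by (intro prob_random_code_good) auto
  also have "\<dots> \<le> measure_pmf.prob (random_code (code_size R n) n) (?good d)"
    unfolding d_def by (intro measure_pmf.finite_measure_mono) (auto intro: add_increasing2)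
  moreover have "0 \<le> 2 * real n / p"
    using assms(9) by simp
  ultimately show ?thesis
    unfolding d_def by linarith
qed

theorem theorem4p5:
  fixes rho_r rho_w eps :: real
  assumes "0 < rho_r" "rho_r < 1"
    and "0 < rho_w" "rho_w < 1/2"
    and "0 < eps"
    and "rho_r < 1 - bin_entropy rho_w - 2 * eps"
  defines "R \<equiv> 1 - bin_entropy rho_w - eps"
  shows "\<exists>\<delta> :: nat \<Rightarrow> real. \<delta> \<longlonglongrightarrow> 0 \<and>
    (\<forall>n. measure_pmf.prob (random_code (code_size R n) n)
           {c. \<forall>S E. admissible_adversary rho_r rho_w n S E \<longrightarrow>
                   error_prob rho_w n (code_size R n) c S E \<le> \<delta> n}
         \<ge> 1 - \<delta> n)"
proof -
  have R: "rho_r + eps \<le> R"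
    using assms(6) unfolding R_def by linarith
  define p where "p = (\<lambda>n::nat. 2 powr (eps * real n / 2))"
  define F where "F = (\<lambda>n. 2 * real n / p n + 2 * real n * 8^n * exp (- p n / 4))"
  define \<delta> where "\<delta> = (\<lambda>n. if 8 \<le> p n then F n else 1)"
  have "F \<longlonglongrightarrow> 0" and "eventually (\<lambda>n. 8 \<le> p n) sequentially"
    unfolding F_def p_def using \<open>0 < eps\<close> by real_asymp+
  then have "\<delta> \<longlonglongrightarrow> 0"
    by (rule Lim_transform_eventually[OF _ eventually_mono]) (simp add: \<delta>_def)
  moreover have "1 - \<delta> n \<le> measure_pmf.prob (random_code (code_size R n) n)
           {c. \<forall>S E. admissible_adversary rho_r rho_w n S E \<longrightarrow>
                   error_prob rho_w n (code_size R n) c S E \<le> \<delta> n}" for n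
    using prob_code_size_good[OF assms(3,4,5,1) R_def[THEN meta_eq_to_obj_eq] R, of n]
    unfolding \<delta>_def F_def p_def by simp
  ultimately show ?thesis
    by blast
qed

end
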